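(* In a finite two-player game in normal form (bimatrix game), if there is a unique Nash equilibrium and this equilibrium is in pure strategies, then it is a strict Nash equilibrium.
   Context: A Nash equilibrium $(s_1,s_2)$ in pure strategies is strict if each player's equilibrium strategy is her unique best reply to the other player's equilibrium strategy. *)

theory Defs
  imports Main "HOL.Real"
begin

definition mixed :: "('a::finite \<Rightarrow> real) \<Rightarrow> bool" where
  "mixed x \<longleftrightarrow> (\<forall>i. 0 \<le> x i) \<and> (\<Sum>i\<in>UNIV. x i) = 1"

definition payoff :: "('a::finite \<Rightarrow> 'b::finite \<Rightarrow> real) \<Rightarrow> ('a \<Rightarrow> real) \<Rightarrow> ('b \<Rightarrow> real) \<Rightarrow> real" where
  "payoff M x y = (\<Sum>i\<in>UNIV. \<Sum>j\<in>UNIV. x i * y j * M i j)"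

definition best_reply1 :: "('a::finite \<Rightarrow> 'b::finite \<Rightarrow> real) \<Rightarrow> ('a \<Rightarrow> real) \<Rightarrow> ('b \<Rightarrow> real) \<Rightarrow> bool" where
  "best_reply1 A x y \<longleftrightarrow> mixed x \<and> (\<forall>x'. mixed x' \<longrightarrow> payoff A x' y \<le> payoff A x y)"

definition best_reply2 :: "('a::finite \<Rightarrow> 'b::finite \<Rightarrow> real) \<Rightarrow> ('b \<Rightarrow> real) \<Rightarrow> ('a \<Rightarrow> real) \<Rightarrow> bool" where
  "best_reply2 B y x \<longleftrightarrow> mixed y \<and> (\<forall>y'. mixed y' \<longrightarrow> payoff B x y' \<le> payoff B x y)"

definition nash :: "('a::finite \<Rightarrow> 'b::finite \<Rightarrow> real) \<Rightarrow> ('a \<Rightarrow> 'b \<Rightarrow> real) \<Rightarrow> ('a \<Rightarrow> real) \<Rightarrow> ('b \<Rightarrow> real) \<Rightarrow> bool" where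
  "nash A B x y \<longleftrightarrow> mixed x \<and> mixed y \<and> best_reply1 A x y \<and> best_reply2 B y x"

definition pure :: "'a \<Rightarrow> 'a \<Rightarrow> real" where
  "pure s = (\<lambda>i. if i = s then 1 else 0)"

definition strict_nash :: "('a::finite \<Rightarrow> 'b::finite \<Rightarrow> real) \<Rightarrow> ('a \<Rightarrow> 'b \<Rightarrow> real) \<Rightarrow> 'a \<Rightarrow> 'b \<Rightarrow> bool" where
  "strict_nash A B s1 s2 \<longleftrightarrow> nash A B (pure s1) (pure s2) \<and>
     (\<forall>x. best_reply1 A x (pure s2) \<longrightarrow> x = pure s1) \<and>
     (\<forall>y. best_reply2 B y (pure s1) \<longrightarrow> y = pure s2)"

end

theory Submission
  imports Defs "HOL-Analysis.Analysis"
begin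

text \<open>
  Suppose player 1 had a second best reply \<open>t \<noteq> s\<^sub>1\<close> to \<open>s\<^sub>2\<close>. Reward row \<open>t\<close> by
  \<open>\<epsilon> = 1/(n+1)\<close> and pick equilibria of the perturbed games (they exist by Nash's theorem,
  proved here with Brouwer's fixed point theorem). A convergent subsequence tends to an
  equilibrium of the original game, hence to \<open>(s\<^sub>1, s\<^sub>2)\<close>. Close to the limit, \<open>s\<^sub>1\<close> is in
  the support of player 1's perturbed strategy \<open>x\<close>, so \<open>s\<^sub>1\<close> is optimal against player 2's
  strategy \<open>y\<close> even after the reward; and every column that is worse than \<open>s\<^sub>2\<close> against
  \<open>s\<^sub>1\<close> is also worse against \<open>x\<close>, so \<open>y\<close> only uses best replies to \<open>s\<^sub>1\<close>. Thus
  \<open>(s\<^sub>1, y)\<close> is an equilibrium of the original game, so \<open>y = s\<^sub>2\<close>; but then row \<open>t\<close> earns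
  \<open>\<epsilon>\<close> more than row \<open>s\<^sub>1\<close> against \<open>s\<^sub>2\<close>. The same argument for the transposed game handles
  player 2.
\<close>

definition transposed :: "('a \<Rightarrow> 'b \<Rightarrow> real) \<Rightarrow> 'b \<Rightarrow> 'a \<Rightarrow> real" where
  "transposed M j i = M i j"

lemma mixed_nonneg: "mixed x \<Longrightarrow> 0 \<le> x i"
  by (simp add: mixed_def)

lemma mixed_has_support: "mixed x \<Longrightarrow> \<exists>k. 0 < x k"
  unfolding mixed_def by (metis less_eq_real_def sum.neutral zero_neq_one)

lemma mixed_pure: "mixed (pure s)"
  by (simp add: mixed_def pure_def)

lemma mixed_eq_pure:
  assumes "mixed x" and "\<And>t. t \<noteq> s \<Longrightarrow> x t = 0"
  shows "x = pure s"
proof -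
  have "(\<Sum>i\<in>UNIV. x i) = x s"
    using assms(2) by (subst sum.remove[of _ s]) auto
  then show ?thesis
    using assms by (auto simp: mixed_def pure_def)
qed

lemma sum_pure_mult: "(\<Sum>i\<in>UNIV. pure (s::'a::finite) i * f i) = f s"
proof -
  have "(\<Sum>i\<in>UNIV. pure s i * f i) = (\<Sum>i\<in>UNIV. if i = s then f i else 0)"
    by (rule sum.cong) (auto simp: pure_def)
  then show ?thesis by simp
qed

lemma payoff_pure_left: "payoff M (pure i) y = (\<Sum>j\<in>UNIV. y j * M i j)"
proof -
  have "payoff M (pure i) y = (\<Sum>k\<in>UNIV. pure i k * (\<Sum>j\<in>UNIV. y j * M k j))"
    by (simp add: payoff_def sum_distrib_left mult.assoc)
  then show ?thesis
    by (simp add: sum_pure_mult)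
qed

lemma payoff_pure_pure: "payoff M (pure i) (pure j) = M i j"
  by (simp add: payoff_pure_left sum_pure_mult)

lemma payoff_eq_sum_pure_left: "payoff M x y = (\<Sum>i\<in>UNIV. x i * payoff M (pure i) y)"
  by (simp add: payoff_pure_left) (simp add: payoff_def sum_distrib_left mult_ac)

lemma payoff_transposed: "payoff (transposed M) y x = payoff M x y"
  unfolding payoff_def transposed_def by (subst sum.swap) (simp add: mult_ac)

lemma payoff_pure_add_row:
  assumes "mixed y"
  shows "payoff (\<lambda>i j. M i j + c i) (pure i) y = payoff M (pure i) y + c i"
  using assms by (simp add: payoff_pure_left mixed_def distrib_left sum.distrib flip: sum_distrib_right)

lemma best_reply2_eq_transposed: "best_reply2 B y x = best_reply1 (transposed B) y x"
  unfolding best_reply1_def best_reply2_def by (simp add: payoff_transposed)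

lemma nash_transposed: "nash (transposed B) (transposed A) y x = nash A B x y"
  unfolding nash_def best_reply2_eq_transposed best_reply1_def by (auto simp: payoff_transposed)

lemma best_reply1_mixed: "best_reply1 A x y \<Longrightarrow> mixed x"
  by (simp add: best_reply1_def)

lemma mixed_average_le:
  assumes "mixed x" and "\<And>i. 0 < x i \<Longrightarrow> r i \<le> c"
  shows "(\<Sum>i\<in>UNIV. x i * r i) \<le> c"
proof -
  have "(\<Sum>i\<in>UNIV. x i * r i) \<le> (\<Sum>i\<in>UNIV. x i * c)"
    using assms by (intro sum_mono) (metis mixed_nonneg mult_left_mono order_le_less mult_zero_left)
  also have "\<dots> = c"
    using assms(1) by (simp add: mixed_def flip: sum_distrib_right)
  finally show ?thesis .
qed

lemma mixed_average_less:
  assumes "mixed x" and "\<And>i. 0 < x i \<Longrightarrow> r i \<le> c" and "0 < x k" and "r k < c"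
  shows "(\<Sum>i\<in>UNIV. x i * r i) < c"
proof -
  have "(\<Sum>i\<in>UNIV. x i * r i) < (\<Sum>i\<in>UNIV. x i * c)"
  proof (rule sum_strict_mono_ex1)
    show "\<forall>i\<in>UNIV. x i * r i \<le> x i * c"
      using assms(1,2) by (metis mixed_nonneg mult_left_mono order_le_less mult_zero_left)
    show "\<exists>i\<in>UNIV. x i * r i < x i * c"
      using assms(3,4) by (auto intro: mult_strict_left_mono)
  qed simp
  also have "\<dots> = c"
    using assms(1) by (simp add: mixed_def flip: sum_distrib_right)
  finally show ?thesis .
qed

lemma mixed_support_le_average:
  assumes "mixed x"
  obtains k where "0 < x k" and "r k \<le> (\<Sum>i\<in>UNIV. x i * r i)"
proof (rule ccontr)
  let ?avg = "\<Sum>i\<in>UNIV. x i * r i"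
  assume "\<not> thesis"
  with that have above: "0 < x i \<Longrightarrow> ?avg < r i" for i
    by (meson not_le)
  obtain k where "0 < x k"
    using mixed_has_support[OF assms] by blast
  with above have "(\<Sum>i\<in>UNIV. x i * - r i) < - ?avg"
    by (intro mixed_average_less[OF assms]) (auto simp: less_imp_le)
  then show False
    by (simp add: sum_negf)
qed

lemma best_reply1_iff_pure:
  assumes "mixed x"
  shows "best_reply1 A x y \<longleftrightarrow> (\<forall>i. payoff A (pure i) y \<le> payoff A x y)"
proof
  show "best_reply1 A x y \<Longrightarrow> \<forall>i. payoff A (pure i) y \<le> payoff A x y"
    by (simp add: best_reply1_def mixed_pure)
  assume rows: "\<forall>i. payoff A (pure i) y \<le> payoff A x y"
  have "payoff A x' y \<le> payoff A x y" if "mixed x'" for x'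
    unfolding payoff_eq_sum_pure_left[of A x'] using that rows by (intro mixed_average_le) auto
  then show "best_reply1 A x y"
    using assms by (simp add: best_reply1_def)
qed

lemma best_reply1_support:
  assumes br: "best_reply1 A x y" and "0 < x k"
  shows "payoff A (pure i) y \<le> payoff A (pure k) y"
proof -
  have mx: "mixed x"
    using best_reply1_mixed[OF br] .
  have rows: "payoff A (pure j) y \<le> payoff A x y" for j
    using br mx best_reply1_iff_pure by blast
  have "\<not> payoff A (pure k) y < payoff A x y"
    using mixed_average_less[OF mx _ \<open>0 < x k\<close>, of "\<lambda>j. payoff A (pure j) y"] rows
    by (auto simp flip: payoff_eq_sum_pure_left)
  then show ?thesis
    using rows[of i] rows[of k] by linarith
qed

lemma best_reply1_if_support_optimal:
  assumes mx: "mixed x"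
    and opt: "\<And>k i. 0 < x k \<Longrightarrow> payoff A (pure i) y \<le> payoff A (pure k) y"
  shows "best_reply1 A x y"
proof -
  obtain k where "0 < x k" and "payoff A (pure k) y \<le> payoff A x y"
    using mixed_support_le_average[OF mx, of "\<lambda>j. payoff A (pure j) y"]
    by (auto simp flip: payoff_eq_sum_pure_left)
  then show ?thesis
    using opt mx best_reply1_iff_pure by (meson order_trans)
qed

definition nash_gain ::
    "('a::finite \<Rightarrow> 'b::finite \<Rightarrow> real) \<Rightarrow> ('a \<Rightarrow> real) \<Rightarrow> ('b \<Rightarrow> real) \<Rightarrow> 'a \<Rightarrow> real" where
  "nash_gain A x y i = max 0 (payoff A (pure i) y - payoff A x y)"

text \<open>Nash's map: shift weight towards the pure strategies that beat the current mixed one.\<close>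

definition nash_update ::
    "('a::finite \<Rightarrow> 'b::finite \<Rightarrow> real) \<Rightarrow> ('a \<Rightarrow> real) \<Rightarrow> ('b \<Rightarrow> real) \<Rightarrow> 'a \<Rightarrow> real" where
  "nash_update A x y i = (x i + nash_gain A x y i) / (1 + (\<Sum>k\<in>UNIV. nash_gain A x y k))"

lemma nash_gain_nonneg: "0 \<le> nash_gain A x y i"
  by (simp add: nash_gain_def)

lemma sum_nash_gain_nonneg: "0 \<le> (\<Sum>k\<in>UNIV. nash_gain A x y k)"
  by (simp add: sum_nonneg nash_gain_nonneg)

lemma mixed_nash_update:
  assumes "mixed x"
  shows "mixed (nash_update A x y)"
proof -
  let ?G = "\<Sum>k\<in>UNIV. nash_gain A x y k"
  have "(\<Sum>i\<in>UNIV. nash_update A x y i) = (\<Sum>i\<in>UNIV. x i + nash_gain A x y i) / (1 + ?G)"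
    by (simp add: nash_update_def sum_divide_distrib)
  also have "\<dots> = 1"
    using assms sum_nash_gain_nonneg[of A x y] by (simp add: mixed_def sum.distrib)
  finally show ?thesis
    using assms sum_nash_gain_nonneg[of A x y]
    by (simp add: mixed_def nash_update_def nash_gain_nonneg)
qed

lemma best_reply1_if_nash_update_fixed:
  assumes mx: "mixed x" and fixed: "nash_update A x y = x"
  shows "best_reply1 A x y"
proof -
  let ?g = "nash_gain A x y"
  let ?G = "\<Sum>k\<in>UNIV. ?g k"
  have scaled: "x i * ?G = ?g i" for i
  proof -
    have "x i = (x i + ?g i) / (1 + ?G)"
      using fun_cong[OF fixed, of i] by (simp add: nash_update_def)
    then have "x i * (1 + ?G) = x i + ?g i"
      using sum_nash_gain_nonneg[of A x y] by (simp add: field_simps)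
    then show ?thesis
      by (simp add: algebra_simps)
  qed
  obtain k where "0 < x k" and "payoff A (pure k) y \<le> payoff A x y"
    using mixed_support_le_average[OF mx, of "\<lambda>j. payoff A (pure j) y"]
    by (auto simp flip: payoff_eq_sum_pure_left)
  then have "?G = 0"
    using scaled[of k] by (simp add: nash_gain_def)
  then have "?g i = 0" for i
    using sum_nonneg_eq_0_iff[of UNIV ?g] by (simp add: nash_gain_nonneg)
  moreover have "payoff A (pure i) y - payoff A x y \<le> ?g i" for i
    by (simp add: nash_gain_def)
  ultimately have "payoff A (pure i) y \<le> payoff A x y" for i
    by (metis diff_le_0_iff_le)
  then show ?thesis
    using best_reply1_iff_pure[OF mx] by blast
qed

text \<open>Mixed strategies as points of \<open>real^'n\<close>, where Brouwer's theorem is available.\<close>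

definition simplex_vec :: "(real^'n) set" where
  "simplex_vec = {u. mixed (vec_nth u)}"

lemma compact_simplex_vec: "compact (simplex_vec :: (real^'n) set)"
proof -
  have "simplex_vec \<subseteq> cbox (0::real^'n) 1"
  proof
    fix u :: "real^'n"
    assume u: "u \<in> simplex_vec"
    then have "u $ i \<le> (\<Sum>k\<in>UNIV. u $ k)" for i
      by (intro member_le_sum) (auto simp: simplex_vec_def mixed_def)
    with u show "u \<in> cbox 0 1"
      by (auto simp: mem_box_cart simplex_vec_def mixed_def)
  qed
  then have "bounded (simplex_vec :: (real^'n) set)"
    using bounded_cbox bounded_subset by blast
  moreover have "closed (simplex_vec :: (real^'n) set)"
  proof -
    have "simplex_vec = {u::real^'n. \<forall>i. 0 \<le> u $ i} \<inter> {u. (\<Sum>i\<in>UNIV. u $ i) = 1}"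
      by (auto simp: simplex_vec_def mixed_def)
    moreover have "closed {u::real^'n. (\<Sum>i\<in>UNIV. u $ i) = 1}"
      by (intro closed_Collect_eq continuous_intros)
    ultimately show ?thesis
      using closed_positive_orthant closed_Int by metis
  qed
  ultimately show ?thesis
    using compact_eq_bounded_closed by blast
qed

lemma convex_simplex_vec: "convex (simplex_vec :: (real^'n) set)"
  unfolding convex_def simplex_vec_def mixed_def
  by (auto simp: sum.distrib simp flip: sum_distrib_left)

lemma vec_lambda_pure_in_simplex_vec: "(\<chi> i. pure s i) \<in> simplex_vec"
  by (simp add: simplex_vec_def vec_lambda_inverse mixed_pure)

lemma continuous_on_nash_update:
  fixes u :: "'c::topological_space \<Rightarrow> real^'a::finite" and w :: "'c \<Rightarrow> real^'b::finite"
  assumes "continuous_on S u" and "continuous_on S w"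
  shows "continuous_on S (\<lambda>p. nash_update A (vec_nth (u p)) (vec_nth (w p)) i)"
proof -
  have "1 + (\<Sum>k\<in>UNIV. max 0 (g k)) \<noteq> (0::real)" for g :: "'a \<Rightarrow> real"
  proof -
    have "0 \<le> (\<Sum>k\<in>UNIV. max 0 (g k))"
      by (intro sum_nonneg) simp
    then show ?thesis
      by linarith
  qed
  then show ?thesis
    unfolding nash_update_def nash_gain_def payoff_def
    by (intro continuous_intros assms) auto
qed

theorem nash_exists: "\<exists>x y. nash (A::'a::finite \<Rightarrow> 'b::finite \<Rightarrow> real) B x y"
proof -
  define S where "S = (simplex_vec :: (real^'a) set) \<times> (simplex_vec :: (real^'b) set)"
  define F where "F p = ((\<chi> i. nash_update A (vec_nth (fst p)) (vec_nth (snd p)) i),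
      (\<chi> j. nash_update (transposed B) (vec_nth (snd p)) (vec_nth (fst p)) j))"
    for p :: "(real^'a) \<times> (real^'b)"
  have "compact S" and "convex S" and "S \<noteq> {}"
    unfolding S_def using vec_lambda_pure_in_simplex_vec
    by (auto intro!: compact_Times compact_simplex_vec convex_Times convex_simplex_vec)
      (metis empty_iff vec_lambda_pure_in_simplex_vec)
  moreover have "continuous_on S F"
    unfolding F_def
    by (intro continuous_on_Pair continuous_on_vec_lambda continuous_on_nash_update
        continuous_on_fst continuous_on_snd continuous_on_id)
  moreover have "F \<in> S \<rightarrow> S"
    by (auto simp: S_def F_def simplex_vec_def vec_lambda_inverse mixed_nash_update)
  ultimately obtain p where p: "p \<in> S" "F p = p"
    using brouwer by blast
  define x where "x = vec_nth (fst p)"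
  define y where "y = vec_nth (snd p)"
  have mx: "mixed x" and my: "mixed y"
    using p(1) by (auto simp: S_def x_def y_def simplex_vec_def)
  have "nash_update A x y = x" and "nash_update (transposed B) y x = y"
    using p(2) by (auto simp: F_def x_def y_def vec_eq_iff prod_eq_iff fun_eq_iff)
  then have "best_reply1 A x y" and "best_reply2 B y x"
    by (simp_all add: best_reply1_if_nash_update_fixed best_reply2_eq_transposed mx my)
  then show ?thesis
    using mx my unfolding nash_def by blast
qed

lemma mixed_limit:
  assumes "\<And>n. mixed (X n)" and "\<And>i. (\<lambda>n. X n i) \<longlonglongrightarrow> x i"
  shows "mixed x"
  unfolding mixed_def
proof
  show "\<forall>i. 0 \<le> x i"
    using assms by (meson LIMSEQ_le_const mixed_nonneg)
  have "(\<lambda>n. \<Sum>i\<in>UNIV. X n i) \<longlonglongrightarrow> (\<Sum>i\<in>UNIV. x i)"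
    by (intro tendsto_sum assms)
  moreover have "(\<lambda>n. \<Sum>i\<in>UNIV. X n i) = (\<lambda>n. 1)"
    using assms(1) by (simp add: mixed_def)
  ultimately show "(\<Sum>i\<in>UNIV. x i) = 1"
    using LIMSEQ_unique tendsto_const by metis
qed

lemma tendsto_payoff:
  assumes "\<And>i j. (\<lambda>n. M n i j) \<longlonglongrightarrow> M' i j"
    and "\<And>i. (\<lambda>n. X n i) \<longlonglongrightarrow> x i" and "\<And>j. (\<lambda>n. Y n j) \<longlonglongrightarrow> y j"
  shows "(\<lambda>n. payoff (M n) (X n) (Y n)) \<longlonglongrightarrow> payoff M' x y"
  unfolding payoff_def by (intro tendsto_sum tendsto_mult assms)

lemma best_reply1_limit:
  assumes br: "\<And>n. best_reply1 (A n) (X n) (Y n)"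
    and A: "\<And>i j. (\<lambda>n. A n i j) \<longlonglongrightarrow> A' i j"
    and X: "\<And>i. (\<lambda>n. X n i) \<longlonglongrightarrow> x i" and Y: "\<And>j. (\<lambda>n. Y n j) \<longlonglongrightarrow> y j"
  shows "best_reply1 A' x y"
proof -
  have mx: "mixed x"
    by (rule mixed_limit[OF best_reply1_mixed[OF br] X])
  have "payoff A' (pure i) y \<le> payoff A' x y" for i
  proof (rule LIMSEQ_le)
    show "(\<lambda>n. payoff (A n) (pure i) (Y n)) \<longlonglongrightarrow> payoff A' (pure i) y"
      by (rule tendsto_payoff[OF A tendsto_const Y])
    show "(\<lambda>n. payoff (A n) (X n) (Y n)) \<longlonglongrightarrow> payoff A' x y"
      by (rule tendsto_payoff[OF A X Y])
    show "\<exists>N. \<forall>n\<ge>N. payoff (A n) (pure i) (Y n) \<le> payoff (A n) (X n) (Y n)"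
      using br by (simp add: best_reply1_def mixed_pure)
  qed
  then show ?thesis
    using best_reply1_iff_pure[OF mx] by blast
qed

lemma nash_limit:
  assumes "\<And>n. nash (A n) (B n) (X n) (Y n)"
    and "\<And>i j. (\<lambda>n. A n i j) \<longlonglongrightarrow> A' i j" and "\<And>i j. (\<lambda>n. B n i j) \<longlonglongrightarrow> B' i j"
    and "\<And>i. (\<lambda>n. X n i) \<longlonglongrightarrow> x i" and "\<And>j. (\<lambda>n. Y n j) \<longlonglongrightarrow> y j"
  shows "nash A' B' x y"
proof -
  have "best_reply1 A' x y"
    by (rule best_reply1_limit[OF _ assms(2,4,5)]) (use assms(1) in \<open>simp add: nash_def\<close>)
  moreover have "best_reply1 (transposed B') y x"
    by (rule best_reply1_limit[of "\<lambda>n. transposed (B n)" Y X])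
      (use assms in \<open>simp_all add: nash_def best_reply2_eq_transposed transposed_def\<close>)
  ultimately show ?thesis
    by (simp add: nash_def best_reply2_eq_transposed best_reply1_def)
qed

lemma nash_subseq_limit:
  fixes X :: "nat \<Rightarrow> 'a::finite \<Rightarrow> real" and Y :: "nat \<Rightarrow> 'b::finite \<Rightarrow> real"
  assumes eq: "\<And>n. nash (A n) (B n) (X n) (Y n)"
    and A: "\<And>i j. (\<lambda>n. A n i j) \<longlonglongrightarrow> A' i j" and B: "\<And>i j. (\<lambda>n. B n i j) \<longlonglongrightarrow> B' i j"
  obtains r x y where "strict_mono r" and "nash A' B' x y"
    and "\<And>i. (\<lambda>n. X (r n) i) \<longlonglongrightarrow> x i" and "\<And>j. (\<lambda>n. Y (r n) j) \<longlonglongrightarrow> y j"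
proof -
  define z where "z n = ((\<chi> i. X n i), (\<chi> j. Y n j))" for n
  have "z n \<in> simplex_vec \<times> simplex_vec" for n
    using eq[of n] by (simp add: z_def simplex_vec_def vec_lambda_inverse nash_def)
  moreover have "seq_compact (simplex_vec \<times> simplex_vec :: ((real^'a) \<times> (real^'b)) set)"
    by (intro compact_imp_seq_compact compact_Times compact_simplex_vec)
  ultimately obtain l r where r: "strict_mono r" and lim: "(z \<circ> r) \<longlonglongrightarrow> l"
    unfolding seq_compact_def by meson
  have X: "(\<lambda>n. X (r n) i) \<longlonglongrightarrow> fst l $ i" for i
    using tendsto_vec_nth[OF tendsto_fst[OF lim]] by (simp add: z_def o_def)
  have Y: "(\<lambda>n. Y (r n) j) \<longlonglongrightarrow> snd l $ j" for j
    using tendsto_vec_nth[OF tendsto_snd[OF lim]] by (simp add: z_def o_def)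
  have "nash A' B' (vec_nth (fst l)) (vec_nth (snd l))"
    by (rule nash_limit[of "A \<circ> r" "B \<circ> r" "X \<circ> r" "Y \<circ> r"])
      (use eq X Y LIMSEQ_subseq_LIMSEQ[OF A r] LIMSEQ_subseq_LIMSEQ[OF B r] in \<open>simp_all add: o_def\<close>)
  with r X Y show ?thesis
    using that by blast
qed

lemma eventually_near_pure:
  assumes X: "\<And>i. (\<lambda>n. X n i) \<longlonglongrightarrow> pure s1 i"
  shows "eventually (\<lambda>n. 0 < X n s1 \<and> (\<forall>j. B s1 j < B s1 s2 \<longrightarrow>
    payoff B (X n) (pure j) < payoff B (X n) (pure s2))) sequentially"
proof (intro eventually_conj eventually_all_finite)
  show "eventually (\<lambda>n. 0 < X n s1) sequentially"
    using order_tendstoD(1)[OF X[of s1], of 0] by (simp add: pure_def)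
  fix j
  have "(\<lambda>n. payoff B (X n) (pure s2) - payoff B (X n) (pure j)) \<longlonglongrightarrow> B s1 s2 - B s1 j"
    using tendsto_diff[OF tendsto_payoff[of "\<lambda>_. B" B X "pure s1" "\<lambda>_. pure s2" "pure s2"]
        tendsto_payoff[of "\<lambda>_. B" B X "pure s1" "\<lambda>_. pure j" "pure j"]] X
    by (simp add: payoff_pure_pure)
  from order_tendstoD(1)[OF this, of 0]
  show "eventually (\<lambda>n. B s1 j < B s1 s2 \<longrightarrow>
      payoff B (X n) (pure j) < payoff B (X n) (pure s2)) sequentially"
    by (cases "B s1 j < B s1 s2") simp_all
qed

lemma nash_pure_iff:
  "nash A B (pure s1) (pure s2) \<longleftrightarrow> (\<forall>i. A i s2 \<le> A s1 s2) \<and> (\<forall>j. B s1 j \<le> B s1 s2)"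
  by (simp add: nash_def best_reply2_eq_transposed best_reply1_iff_pure mixed_pure
      payoff_pure_pure transposed_def)

lemma best_reply1_perturbed_row:
  assumes "best_reply1 (\<lambda>i j. A i j + c i) x y" and "0 < x k" and "c k = 0" and "mixed y"
  shows "payoff A (pure i) y + c i \<le> payoff A (pure k) y"
  using best_reply1_support[OF assms(1,2), of i] assms(3)
  by (simp add: payoff_pure_add_row[OF \<open>mixed y\<close>])

lemma best_reply1_eq_pure_if_strict:
  assumes strict: "\<And>t. t \<noteq> s1 \<Longrightarrow> A t s2 < A s1 s2" and br: "best_reply1 A x (pure s2)"
  shows "x = pure s1"
proof (rule mixed_eq_pure)
  show mx: "mixed x"
    using best_reply1_mixed[OF br] .
  fix t
  assume "t \<noteq> s1"
  have "\<not> 0 < x t"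
    using best_reply1_support[OF br, of t s1] strict[OF \<open>t \<noteq> s1\<close>]
    by (auto simp: payoff_pure_pure)
  then show "x t = 0"
    using mixed_nonneg[OF mx, of t] by simp
qed

lemma nash_pure_left_if_perturbed:
  assumes eq: "nash (\<lambda>i j. A i j + c i) B x y"
    and "0 < x s1" and "c s1 = 0" and c_nonneg: "\<And>i. 0 \<le> c i"
    and N: "nash A B (pure s1) (pure s2)"
    and pref: "\<And>j. B s1 j < B s1 s2 \<Longrightarrow> payoff B x (pure j) < payoff B x (pure s2)"
  shows "nash A B (pure s1) y"
proof -
  have my: "mixed y"
    using eq by (simp add: nash_def)
  have "payoff A (pure i) y \<le> payoff A (pure s1) y" for i
    using best_reply1_perturbed_row[of A c x y s1 i] eq assms(2,3) c_nonneg[of i] my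
    by (simp add: nash_def)
  then have br1: "best_reply1 A (pure s1) y"
    using best_reply1_iff_pure[OF mixed_pure] by blast
  have B_le: "B s1 j \<le> B s1 s2" for j
    using N by (simp add: nash_pure_iff)
  have "B s1 j = B s1 s2" if "0 < y j" for j
  proof -
    have "best_reply1 (transposed B) y x"
      using eq by (simp add: nash_def best_reply2_eq_transposed)
    from best_reply1_support[OF this that, of s2]
    have "payoff B x (pure s2) \<le> payoff B x (pure j)"
      by (simp add: payoff_transposed)
    with pref[of j] B_le[of j] show ?thesis
      by linarith
  qed
  then have "best_reply1 (transposed B) y (pure s1)"
    using B_le by (intro best_reply1_if_support_optimal[OF my])
      (simp add: payoff_transposed payoff_pure_pure transposed_def)
  with br1 my show ?thesis
    by (simp add: nash_def best_reply2_eq_transposed mixed_pure)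
qed

lemma perturbed_nash_near_unique_pure:
  fixes A :: "'a::finite \<Rightarrow> 'b::finite \<Rightarrow> real"
  assumes U: "\<forall>x y. nash A B x y \<longrightarrow> x = pure s1 \<and> y = pure s2"
  obtains \<epsilon> x y where "0 < \<epsilon>" and "nash (\<lambda>i j. A i j + \<epsilon> * c i) B x y" and "0 < x s1"
    and "\<And>j. B s1 j < B s1 s2 \<Longrightarrow> payoff B x (pure j) < payoff B x (pure s2)"
proof -
  define \<epsilon> where "\<epsilon> n = inverse (real (Suc n))" for n
  define A\<epsilon> where "A\<epsilon> n i j = A i j + \<epsilon> n * c i" for n i j
  have "\<forall>n. \<exists>x y. nash (A\<epsilon> n) B x y"
    using nash_exists by blast
  then obtain X Y where eq: "\<And>n. nash (A\<epsilon> n) B (X n) (Y n)"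
    by metis
  have A\<epsilon>_lim: "(\<lambda>n. A\<epsilon> n i j) \<longlonglongrightarrow> A i j" for i j
    using tendsto_add[OF tendsto_const tendsto_mult[OF LIMSEQ_inverse_real_of_nat tendsto_const],
        of "A i j" "c i"]
    by (simp add: A\<epsilon>_def \<epsilon>_def)
  obtain r x y where "strict_mono r" and "nash A B x y"
    and X: "\<And>i. (\<lambda>n. X (r n) i) \<longlonglongrightarrow> x i" and "\<And>j. (\<lambda>n. Y (r n) j) \<longlonglongrightarrow> y j"
    by (rule nash_subseq_limit[of A\<epsilon> "\<lambda>_. B" X Y A B, OF eq A\<epsilon>_lim tendsto_const]) blast
  then have "x = pure s1"
    using U by blast
  then have "eventually (\<lambda>n. 0 < X (r n) s1 \<and> (\<forall>j. B s1 j < B s1 s2 \<longrightarrow>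
      payoff B (X (r n)) (pure j) < payoff B (X (r n)) (pure s2))) sequentially"
    using X by (intro eventually_near_pure) simp
  then obtain n where "0 < X (r n) s1" and "\<And>j. B s1 j < B s1 s2 \<Longrightarrow>
      payoff B (X (r n)) (pure j) < payoff B (X (r n)) (pure s2)"
    unfolding eventually_sequentially by blast
  moreover have "nash (\<lambda>i j. A i j + \<epsilon> (r n) * c i) B (X (r n)) (Y (r n))"
    using eq[of "r n"] by (simp add: A\<epsilon>_def[abs_def])
  moreover have "0 < \<epsilon> (r n)"
    by (simp add: \<epsilon>_def)
  ultimately show ?thesis
    using that by blast
qed

lemma unique_pure_nash_strict_row:
  fixes A :: "'a::finite \<Rightarrow> 'b::finite \<Rightarrow> real"
  assumes N: "nash A B (pure s1) (pure s2)"
    and U: "\<forall>x y. nash A B x y \<longrightarrow> x = pure s1 \<and> y = pure s2"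
    and "t \<noteq> s1"
  shows "A t s2 < A s1 s2"
proof (rule ccontr)
  assume "\<not> A t s2 < A s1 s2"
  moreover have "A t s2 \<le> A s1 s2"
    using N by (simp add: nash_pure_iff)
  ultimately have tie: "A t s2 = A s1 s2"
    by linarith
  define bonus where "bonus i = (if i = t then 1 else 0 :: real)" for i
  obtain \<epsilon> x y where "0 < \<epsilon>" and eq: "nash (\<lambda>i j. A i j + \<epsilon> * bonus i) B x y"
    and pos: "0 < x s1"
    and pref: "\<And>j. B s1 j < B s1 s2 \<Longrightarrow> payoff B x (pure j) < payoff B x (pure s2)"
    using perturbed_nash_near_unique_pure[OF U] by blast
  have bonus_s1: "\<epsilon> * bonus s1 = 0"
    using \<open>t \<noteq> s1\<close> by (simp add: bonus_def)
  have "nash A B (pure s1) y"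
    using \<open>0 < \<epsilon>\<close> by (intro nash_pure_left_if_perturbed[OF eq pos bonus_s1 _ N pref])
      (simp add: bonus_def)
  then have "y = pure s2"
    using U by blast
  then have "A t s2 + \<epsilon> \<le> A s1 s2"
    using best_reply1_perturbed_row[of A "\<lambda>i. \<epsilon> * bonus i" x y s1 t] eq pos bonus_s1
    by (simp add: nash_def mixed_pure payoff_pure_pure bonus_def)
  with tie \<open>0 < \<epsilon>\<close> show False
    by simp
qed

theorem proposition1:
  fixes A :: "'a::finite \<Rightarrow> 'b::finite \<Rightarrow> real" and B :: "'a \<Rightarrow> 'b \<Rightarrow> real"
    and s1 :: 'a and s2 :: 'b
  assumes "nash A B (pure s1) (pure s2)"
    and "\<forall>x y. nash A B x y \<longrightarrow> x = pure s1 \<and> y = pure s2"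
  shows "strict_nash A B s1 s2"
proof -
  have row: "\<And>t. t \<noteq> s1 \<Longrightarrow> A t s2 < A s1 s2"
    by (rule unique_pure_nash_strict_row[OF assms])
  have "nash (transposed B) (transposed A) (pure s2) (pure s1)"
    using assms(1) by (simp only: nash_transposed)
  moreover have "\<forall>y x. nash (transposed B) (transposed A) y x \<longrightarrow> y = pure s2 \<and> x = pure s1"
    using assms(2) by (simp only: nash_transposed) blast
  ultimately have col: "\<And>j. j \<noteq> s2 \<Longrightarrow> transposed B j s1 < transposed B s2 s1"
    by (rule unique_pure_nash_strict_row)
  have "\<forall>x. best_reply1 A x (pure s2) \<longrightarrow> x = pure s1"
    using best_reply1_eq_pure_if_strict[of s1 A s2] row by blast
  moreover have "\<forall>y. best_reply2 B y (pure s1) \<longrightarrow> y = pure s2"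
    using best_reply1_eq_pure_if_strict[of s2 "transposed B" s1] col
    by (simp add: best_reply2_eq_transposed)
  ultimately show ?thesis
    using assms(1) by (simp add: strict_nash_def)
qed

end
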